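(* There is a non-atomic left-c.e. semi-measure $\rho$ such that every $X\in2^\omega$ belongs to $\mathsf{MLR}_\rho$.
   Context: $2^{<\omega}$ is the set of finite binary strings, $\varepsilon$ the empty string, $X{\upharpoonright}n$ the first $n$ bits of $X$, $[\![\sigma]\!]=\{X\in2^\omega:\sigma\preceq X\}$, $[\![S]\!]=\bigcup_{\sigma\in S}[\![\sigma]\!]$. A semi-measure is $\rho:2^{<\omega}\to[0,1]$ with $\rho(\varepsilon)=1$ and $\rho(\sigma)\ge\rho(\sigma0)+\rho(\sigma1)$; it is left-c.e. if its values are uniformly approximable from below by a computable, non-decreasing sequence of rationals. Non-atomic means that no $X\in2^\omega$ is an atom, i.e., $\inf_n\rho(X{\upharpoonright}n)=0$ for every $X$. For $E\subseteq2^{<\omega}$, $\rho(E)=\sum_{\sigma\in E}\rho(\sigma)$; $X\in\mathsf{MLR}_\rho$ iff $X\notin\bigcap_i[\![U_i]\!]$ for every uniformly c.e. sequence $(U_i)$ of subsets of $2^{<\omega}$ with $\rho(U_i)\le2^{-i}$ for all $i$. *)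

theory Defs
  imports "HOL-Analysis.Analysis"
begin

datatype recf = Zero | Succ | Proj nat | Comp recf "recf list" | Prim recf recf | Mini recf

inductive eval :: "recf \<Rightarrow> nat list \<Rightarrow> nat \<Rightarrow> bool" where
  eval_zero: "eval Zero xs 0"
| eval_succ: "eval Succ (x # xs) (Suc x)"
| eval_proj: "i < length xs \<Longrightarrow> eval (Proj i) xs (xs ! i)"
| eval_comp: "list_all2 (\<lambda>g y. eval g xs y) gs ys \<Longrightarrow> eval f ys z \<Longrightarrow> eval (Comp f gs) xs z"
| eval_prim0: "eval f xs z \<Longrightarrow> eval (Prim f g) (0 # xs) z"
| eval_primS: "eval (Prim f g) (n # xs) y \<Longrightarrow> eval g (y # n # xs) z
                 \<Longrightarrow> eval (Prim f g) (Suc n # xs) z"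
| eval_mini: "eval f (n # xs) 0 \<Longrightarrow> (\<forall>m<n. \<exists>k. eval f (m # xs) (Suc k))
                 \<Longrightarrow> eval (Mini f) xs n"

text \<open>Finite binary strings are bool lists; infinite sequences are nat => bool.
  Strings are coded by natural numbers via bijective base-2 numeration.\<close>

fun str_code :: "bool list \<Rightarrow> nat" where
  "str_code [] = 0"
| "str_code (b # bs) = 2 * str_code bs + (if b then 2 else 1)"

definition prefix_of :: "(nat \<Rightarrow> bool) \<Rightarrow> nat \<Rightarrow> bool list" where
  "prefix_of X n = map X [0..<n]"

definition cyl :: "bool list set \<Rightarrow> (nat \<Rightarrow> bool) set" where
  "cyl S = {X. \<exists>\<sigma>\<in>S. prefix_of X (length \<sigma>) = \<sigma>}"

definition semimeasure :: "(bool list \<Rightarrow> real) \<Rightarrow> bool" where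
  "semimeasure \<rho> \<longleftrightarrow> (\<forall>\<sigma>. 0 \<le> \<rho> \<sigma> \<and> \<rho> \<sigma> \<le> 1) \<and> \<rho> [] = 1
     \<and> (\<forall>\<sigma>. \<rho> \<sigma> \<ge> \<rho> (\<sigma> @ [False]) + \<rho> (\<sigma> @ [True]))"

definition left_ce :: "(bool list \<Rightarrow> real) \<Rightarrow> bool" where
  "left_ce \<rho> \<longleftrightarrow> (\<exists>q :: bool list \<Rightarrow> nat \<Rightarrow> real.
     (\<exists>ra rb rc. \<forall>\<sigma> s. \<exists>a b c. eval ra [str_code \<sigma>, s] a \<and> eval rb [str_code \<sigma>, s] b
          \<and> eval rc [str_code \<sigma>, s] c \<and> q \<sigma> s = (real a - real b) / (real c + 1))
     \<and> (\<forall>\<sigma> s. q \<sigma> s \<le> q \<sigma> (Suc s))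
     \<and> (\<forall>\<sigma>. q \<sigma> \<longlonglongrightarrow> \<rho> \<sigma>))"

definition non_atomic :: "(bool list \<Rightarrow> real) \<Rightarrow> bool" where
  "non_atomic \<rho> \<longleftrightarrow> (\<forall>X. (INF n. \<rho> (prefix_of X n)) = 0)"

definition rho_set :: "(bool list \<Rightarrow> real) \<Rightarrow> bool list set \<Rightarrow> ennreal" where
  "rho_set \<rho> E = (\<Sum>\<^sub>\<infinity>\<sigma>\<in>E. ennreal (\<rho> \<sigma>))"

definition unif_ce :: "(nat \<Rightarrow> bool list set) \<Rightarrow> bool" where
  "unif_ce U \<longleftrightarrow> (\<exists>r. \<forall>i \<sigma>. \<sigma> \<in> U i \<longleftrightarrow> (\<exists>v. eval r [i, str_code \<sigma>] v))"

definition MLR :: "(bool list \<Rightarrow> real) \<Rightarrow> (nat \<Rightarrow> bool) set" where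
  "MLR \<rho> = {X. \<forall>U. unif_ce U \<and> (\<forall>i. rho_set \<rho> (U i) \<le> ennreal ((1/2) ^ i))
                 \<longrightarrow> X \<notin> (\<Inter>i. cyl (U i))}"

end

theory Submission
  imports Defs "HOL-Library.Nat_Bijection" "HOL-Library.Sublist"
begin

text \<open>Give the program with code \<open>e\<close> an atom of weight \<open>2^-(e+2)\<close> on the first string
  \<open>\<tau>\<^sub>e\<close> it is seen to accept at level \<open>e + 3\<close>, and let \<open>\<rho>(\<sigma>)\<close> be the total weight of the
  atoms above \<open>\<sigma>\<close>. Weights sum to \<open>1/2\<close>, so \<open>\<rho>\<close> is a semi-measure, and the prefixes of any
  \<open>X\<close> eventually miss the atoms of the first \<open>N\<close> programs, so \<open>\<rho>\<close> is non-atomic. The enumeration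
  of the \<open>\<tau>\<^sub>e\<close> makes \<open>\<rho>\<close> left-c.e. Finally, if program \<open>e\<close> enumerates a test \<open>(U\<^sub>i)\<close>, then
  \<open>U\<^sub>e\<^sub>+\<^sub>3\<close> must be empty: otherwise it contains \<open>\<tau>\<^sub>e\<close> and has \<open>\<rho>\<close>-weight at least \<open>2^-(e+2)\<close>.
  Hence no test covers any \<open>X\<close>.

  Computability is handled by building total recursive functions from primitive recursion, and
  the enumeration of halting computations by decidable certificates: finite lists of claimed
  evaluations, each justified by earlier entries.\<close>

section \<open>Total recursive functions\<close>

definition computable :: "nat \<Rightarrow> (nat list \<Rightarrow> nat) \<Rightarrow> bool" where
  "computable n f \<longleftrightarrow> (\<exists>r. \<forall>xs. length xs = n \<longrightarrow> eval r xs (f xs))"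

lemma computable_cong: "computable n f \<Longrightarrow> (\<And>xs. length xs = n \<Longrightarrow> f xs = g xs) \<Longrightarrow> computable n g"
  unfolding computable_def by metis

lemma computable_proj: "i < n \<Longrightarrow> computable n (\<lambda>xs. xs ! i)"
  unfolding computable_def by (auto intro!: exI[of _ "Proj i"] eval_proj)

lemma computable_zero: "computable n (\<lambda>xs. 0)"
  unfolding computable_def by (auto intro!: exI[of _ Zero] eval_zero)

lemma computable_comp:
  assumes h: "computable m h" and g: "\<And>j. j < m \<Longrightarrow> computable n (g j)"
  shows "computable n (\<lambda>xs. h (map (\<lambda>j. g j xs) [0..<m]))"
proof -
  obtain rh where rh: "\<And>xs. length xs = m \<Longrightarrow> eval rh xs (h xs)" using h unfolding computable_def by blast
  have "\<forall>j. \<exists>r. j < m \<longrightarrow> (\<forall>xs. length xs = n \<longrightarrow> eval r xs (g j xs))" using g unfolding computable_def by blast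
  then obtain rg where rg: "\<And>j xs. j < m \<Longrightarrow> length xs = n \<Longrightarrow> eval (rg j) xs (g j xs)" by metis
  show ?thesis unfolding computable_def
  proof (intro exI allI impI)
    fix xs :: "nat list" assume len: "length xs = n"
    show "eval (Comp rh (map rg [0..<m])) xs (h (map (\<lambda>j. g j xs) [0..<m]))"
    proof (rule eval_comp)
      show "list_all2 (\<lambda>g y. eval g xs y) (map rg [0..<m]) (map (\<lambda>j. g j xs) [0..<m])"
        using rg len by (auto simp: list_all2_conv_all_nth)
      show "eval rh (map (\<lambda>j. g j xs) [0..<m]) (h (map (\<lambda>j. g j xs) [0..<m]))"
        by (rule rh) simp
    qed
  qed
qed

lemma computable_comp1: "computable 1 h \<Longrightarrow> computable n a \<Longrightarrow> computable n (\<lambda>xs. h [a xs])"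
  using computable_comp[of 1 h n "\<lambda>j. a"] by simp

lemma computable_comp2: "computable 2 h \<Longrightarrow> computable n a \<Longrightarrow> computable n b \<Longrightarrow> computable n (\<lambda>xs. h [a xs, b xs])"
  using computable_comp[of 2 h n "\<lambda>j. if j = 0 then a else b"] by (simp add: upt_rec)

primrec prim_rec_list :: "(nat list \<Rightarrow> nat) \<Rightarrow> (nat list \<Rightarrow> nat) \<Rightarrow> nat \<Rightarrow> nat list \<Rightarrow> nat" where
  "prim_rec_list f g 0 ys = f ys"
| "prim_rec_list f g (Suc k) ys = g (prim_rec_list f g k ys # k # ys)"

lemma computable_prim_rec:
  assumes f: "computable n f" and g: "computable (Suc (Suc n)) g"
  shows "computable (Suc n) (\<lambda>xs. prim_rec_list f g (hd xs) (tl xs))"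
proof -
  obtain rf where rf: "\<And>xs. length xs = n \<Longrightarrow> eval rf xs (f xs)" using f unfolding computable_def by blast
  obtain rg where rg: "\<And>xs. length xs = Suc (Suc n) \<Longrightarrow> eval rg xs (g xs)" using g unfolding computable_def by blast
  have *: "eval (Prim rf rg) (k # ys) (prim_rec_list f g k ys)" if "length ys = n" for k ys
    using that
  proof (induction k)
    case 0 then show ?case by (auto intro: eval_prim0 rf)
  next
    case (Suc k) then show ?case by (auto intro!: eval_primS rg)
  qed
  show ?thesis unfolding computable_def
    by (rule exI[of _ "Prim rf rg"]) (auto simp: length_Suc_conv intro: *)
qed

lemma computable_Suc: "computable 1 (\<lambda>xs. Suc (hd xs))"
  unfolding computable_def by (auto simp: length_Suc_conv intro!: exI[of _ Succ] eval_succ)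

definition computable1 :: "(nat \<Rightarrow> nat) \<Rightarrow> bool" where "computable1 F \<longleftrightarrow> computable 1 (\<lambda>xs. F (hd xs))"
definition computable2 :: "(nat \<Rightarrow> nat \<Rightarrow> nat) \<Rightarrow> bool" where "computable2 H \<longleftrightarrow> computable 2 (\<lambda>xs. H (xs!0) (xs!1))"

lemma computable_compose1: "computable1 F \<Longrightarrow> computable n a \<Longrightarrow> computable n (\<lambda>xs. F (a xs))"
  unfolding computable1_def using computable_comp1[of "\<lambda>xs. F (hd xs)" n a] by simp

lemma computable_compose2: "computable2 H \<Longrightarrow> computable n a \<Longrightarrow> computable n b \<Longrightarrow> computable n (\<lambda>xs. H (a xs) (b xs))"
  unfolding computable2_def using computable_comp2[of "\<lambda>xs. H (xs!0) (xs!1)" n a b] by simp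

lemma computable1_Suc: "computable1 Suc" unfolding computable1_def by (rule computable_Suc)

lemma computable_SucI: "computable n a \<Longrightarrow> computable n (\<lambda>xs. Suc (a xs))"
  by (rule computable_compose1[OF computable1_Suc])

lemma computable_const: "computable n (\<lambda>xs. c)"
  by (induction c) (auto intro: computable_zero computable_SucI)

lemma computable_hd: "computable (Suc n) hd"
  using computable_proj[of 0 "Suc n"] by (rule computable_cong) (auto simp: length_Suc_conv)

lemma computable_by_prim_rec:
  assumes "computable n f" and "computable (Suc (Suc n)) g"
    and "\<And>k ys. length ys = n \<Longrightarrow> h (k # ys) = prim_rec_list f g k ys" and "m = Suc n"
  shows "computable m h"
  using computable_prim_rec[OF assms(1,2)] unfolding assms(4)
  by (rule computable_cong) (auto simp: length_Suc_conv assms(3))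

lemma computable2_add: "computable2 (+)"
  unfolding computable2_def
proof (rule computable_by_prim_rec[where n = 1 and f = "\<lambda>ys. ys!0" and g = "\<lambda>zs. Suc (zs!0)"])
  show "(k # ys)!0 + (k # ys)!1 = prim_rec_list (\<lambda>ys. ys!0) (\<lambda>zs. Suc (zs!0)) k ys" for k ys
    by (induction k) auto
qed (auto intro: computable_proj computable_SucI)

lemma computable1_pred: "computable1 (\<lambda>x. x - 1)"
  unfolding computable1_def
proof (rule computable_by_prim_rec[where n = 0 and f = "\<lambda>ys. 0" and g = "\<lambda>zs. zs!1"])
  show "hd (k # ys) - 1 = prim_rec_list (\<lambda>ys. 0) (\<lambda>zs. zs!1) k ys" for k ys
    by (induction k) auto
qed (auto intro: computable_proj computable_zero)

lemma computable2_sub: "computable2 (-)"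
proof -
  have "computable 2 (\<lambda>xs. xs!1 - xs!0)"
  proof (rule computable_by_prim_rec[where n = 1 and f = "\<lambda>ys. ys!0" and g = "\<lambda>zs. zs!0 - 1"])
    show "(k # ys)!1 - (k # ys)!0 = prim_rec_list (\<lambda>ys. ys!0) (\<lambda>zs. zs!0 - 1) k ys" for k ys
      by (induction k) auto
  qed (use computable_compose1[OF computable1_pred computable_proj[of 0 3]] in \<open>auto simp: numeral_3_eq_3 intro: computable_proj\<close>)
  from computable_comp2[OF this, of 2 "\<lambda>xs. xs!1" "\<lambda>xs. xs!0"] show ?thesis
    unfolding computable2_def by (simp add: computable_proj)
qed

lemma computable2_mult: "computable2 (*)"
  unfolding computable2_def
proof (rule computable_by_prim_rec[where n = 1 and f = "\<lambda>ys. 0" and g = "\<lambda>zs. zs!0 + zs!2"])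
  show "(k # ys)!0 * (k # ys)!1 = prim_rec_list (\<lambda>ys. 0) (\<lambda>zs. zs!0 + zs!2) k ys" for k ys
    by (induction k) auto
qed (auto intro!: computable_proj computable_zero computable_compose2[OF computable2_add])

lemma computable1_triangle: "computable1 triangle"
  unfolding computable1_def
proof (rule computable_by_prim_rec[where n = 0 and f = "\<lambda>ys. 0" and g = "\<lambda>zs. zs!0 + Suc (zs!1)"])
  show "triangle (hd (k # ys)) = prim_rec_list (\<lambda>ys. 0) (\<lambda>zs. zs!0 + Suc (zs!1)) k ys" for k ys
    by (induction k) auto
qed (auto intro!: computable_proj computable_zero computable_SucI computable_compose2[OF computable2_add])

lemma computable1_pow2: "computable1 (\<lambda>k. 2 ^ k)"
  unfolding computable1_def
proof (rule computable_by_prim_rec[where n = 0 and f = "\<lambda>ys. 1" and g = "\<lambda>zs. zs!0 + zs!0"])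
  show "2 ^ hd (k # ys) = prim_rec_list (\<lambda>ys. 1) (\<lambda>zs. zs!0 + zs!0) k ys" for k ys
    by (induction k) auto
qed (auto intro: computable_proj computable_const computable_compose2[OF computable2_add])

text \<open>The diagonal of Cantor's pairing containing \<open>n\<close>, i.e. the largest \<open>t\<close> with
  \<open>triangle t \<le> n\<close>, computed by primitive recursion without division.\<close>

primrec tri_root :: "nat \<Rightarrow> nat" where
  "tri_root 0 = 0"
| "tri_root (Suc k) = tri_root k + (1 - (triangle (tri_root k + 1) - (k + 1)))"

lemma tri_root_bounds: "triangle (tri_root n) \<le> n \<and> n < triangle (tri_root n) + tri_root n + 1"
proof (induction n)
  case (Suc n)
  then show ?case
    by (cases "triangle (tri_root n + 1) \<le> n + 1") auto
qed simp

lemma computable1_tri_root: "computable1 tri_root"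
  unfolding computable1_def
proof (rule computable_by_prim_rec[where n = 0 and f = "\<lambda>ys. 0"
      and g = "\<lambda>zs. zs!0 + (1 - (triangle (zs!0 + 1) - (zs!1 + 1)))"])
  show "tri_root (hd (k # ys)) = prim_rec_list (\<lambda>ys. 0) (\<lambda>zs. zs!0 + (1 - (triangle (zs!0 + 1) - (zs!1 + 1)))) k ys" for k ys
    by (induction k) auto
qed (auto intro!: computable_proj computable_zero computable_const computable_compose2[OF computable2_add]
    computable_compose2[OF computable2_sub] computable_compose1[OF computable1_triangle])

definition pair :: "nat \<Rightarrow> nat \<Rightarrow> nat" where "pair a b = prod_encode (a, b)"
definition pfst :: "nat \<Rightarrow> nat" where "pfst n = fst (prod_decode n)"
definition psnd :: "nat \<Rightarrow> nat" where "psnd n = snd (prod_decode n)"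

lemma pfst_pair[simp]: "pfst (pair a b) = a" and psnd_pair[simp]: "psnd (pair a b) = b"
  by (auto simp: pfst_def psnd_def pair_def)
lemma pair_pfst_psnd[simp]: "pair (pfst n) (psnd n) = n"
  by (simp add: pfst_def psnd_def pair_def)

lemma pfst_eq: "pfst n = n - triangle (tri_root n)" and psnd_eq: "psnd n = tri_root n - (n - triangle (tri_root n))"
proof -
  let ?a = "n - triangle (tri_root n)" and ?b = "tri_root n - (n - triangle (tri_root n))"
  have "pair ?a ?b = n" using tri_root_bounds[of n] by (simp add: pair_def prod_encode_def)
  then have "pfst n = ?a \<and> psnd n = ?b" by (metis pfst_pair psnd_pair)
  then show "pfst n = ?a" "psnd n = ?b" by auto
qed

lemma computable2_pair: "computable2 pair"
proof -
  have "computable 2 (\<lambda>xs. triangle (xs!0 + xs!1) + xs!0)"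
    by (simp add: computable_proj computable_compose2[OF computable2_add] computable_compose1[OF computable1_triangle])
  then show ?thesis unfolding computable2_def by (rule computable_cong) (auto simp: pair_def prod_encode_def length_Suc_conv numeral_2_eq_2)
qed

lemma computable1_pfst: "computable1 pfst"
proof -
  have "computable 1 (\<lambda>xs. hd xs - triangle (tri_root (hd xs)))"
    by (simp add: computable_hd computable_compose2[OF computable2_sub] computable_compose1[OF computable1_triangle] computable_compose1[OF computable1_tri_root])
  then show ?thesis unfolding computable1_def by (rule computable_cong) (auto simp: pfst_eq length_Suc_conv)
qed

lemma computable1_psnd: "computable1 psnd"
proof -
  have "computable 1 (\<lambda>xs. tri_root (hd xs) - (hd xs - triangle (tri_root (hd xs))))"
    by (simp add: computable_hd computable_compose2[OF computable2_sub] computable_compose1[OF computable1_triangle] computable_compose1[OF computable1_tri_root])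
  then show ?thesis unfolding computable1_def by (rule computable_cong) (auto simp: psnd_eq length_Suc_conv)
qed

text \<open>Several arguments are packed into one by \<open>pair\<close>: a binary function \<open>f\<close> is handled as
  \<open>computable1 (\<lambda>p. f (pfst p) (psnd p))\<close>.\<close>

lemma computable1_idI: "computable1 (\<lambda>x. x)" unfolding computable1_def using computable_hd[of 0] by simp
lemma computable1_constI: "computable1 (\<lambda>x. c)" unfolding computable1_def by (rule computable_const)
lemma computable1_compose1: "computable1 F \<Longrightarrow> computable1 a \<Longrightarrow> computable1 (\<lambda>x. F (a x))"
  unfolding computable1_def by (rule computable_compose1) (auto simp: computable1_def)
lemma computable1_compose2: "computable2 H \<Longrightarrow> computable1 a \<Longrightarrow> computable1 b \<Longrightarrow> computable1 (\<lambda>x. H (a x) (b x))"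
  unfolding computable1_def by (rule computable_compose2) auto

lemma computable1_addI: "computable1 a \<Longrightarrow> computable1 b \<Longrightarrow> computable1 (\<lambda>x. a x + b x)"
  by (rule computable1_compose2[OF computable2_add])

lemma computable1_subI: "computable1 a \<Longrightarrow> computable1 b \<Longrightarrow> computable1 (\<lambda>x. a x - b x)"
  by (rule computable1_compose2[OF computable2_sub])

lemma computable1_multI: "computable1 a \<Longrightarrow> computable1 b \<Longrightarrow> computable1 (\<lambda>x. a x * b x)"
  by (rule computable1_compose2[OF computable2_mult])

lemma computable1_pairI: "computable1 a \<Longrightarrow> computable1 b \<Longrightarrow> computable1 (\<lambda>x. pair (a x) (b x))"
  by (rule computable1_compose2[OF computable2_pair])

lemma computable1_pfstI: "computable1 a \<Longrightarrow> computable1 (\<lambda>x. pfst (a x))"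
  by (rule computable1_compose1[OF computable1_pfst])

lemma computable1_psndI: "computable1 a \<Longrightarrow> computable1 (\<lambda>x. psnd (a x))"
  by (rule computable1_compose1[OF computable1_psnd])

lemma computable1_SucI: "computable1 a \<Longrightarrow> computable1 (\<lambda>x. Suc (a x))"
  by (rule computable1_compose1[OF computable1_Suc])
lemma computable1_pow2I: "computable1 a \<Longrightarrow> computable1 (\<lambda>x. 2 ^ (a x))"
  by (rule computable1_compose1[OF computable1_pow2])

lemmas computable1_arith_intros = computable1_idI computable1_constI computable1_addI
  computable1_subI computable1_multI computable1_pairI computable1_pfstI computable1_psndI
  computable1_SucI computable1_pow2I

primrec prim_rec :: "(nat \<Rightarrow> nat) \<Rightarrow> (nat \<Rightarrow> nat \<Rightarrow> nat \<Rightarrow> nat) \<Rightarrow> nat \<Rightarrow> nat \<Rightarrow> nat" where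
  "prim_rec F G 0 x = F x"
| "prim_rec F G (Suc k) x = G (prim_rec F G k x) k x"

lemma computable1_prim_recI:
  assumes F: "computable1 F" and G: "computable1 (\<lambda>t. G (pfst t) (pfst (psnd t)) (psnd (psnd t)))"
    and a: "computable1 a" and b: "computable1 b"
  shows "computable1 (\<lambda>x. prim_rec F G (a x) (b x))"
proof -
  have "computable2 (prim_rec F G)"
    unfolding computable2_def
  proof (rule computable_by_prim_rec[where n = 1 and f = "\<lambda>ys. F (hd ys)"
        and g = "\<lambda>zs. G (zs!0) (zs!1) (zs!2)"])
    show "prim_rec F G ((k # ys)!0) ((k # ys)!1) = prim_rec_list (\<lambda>ys. F (hd ys)) (\<lambda>zs. G (zs!0) (zs!1) (zs!2)) k ys"
      if "length ys = 1" for k ys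
      using that by (induction k) (auto simp: length_Suc_conv)
    show "computable (Suc (Suc 1)) (\<lambda>zs. G (zs!0) (zs!1) (zs!2))"
      using computable_compose1[OF G, of 3 "\<lambda>zs. pair (zs!0) (pair (zs!1) (zs!2))"]
      by (simp add: computable_compose2[OF computable2_pair] computable_proj numeral_3_eq_3)
  qed (use F in \<open>simp_all add: computable1_def\<close>)
  then show ?thesis using a b by (rule computable1_compose2)
qed

lemma computable1_ext: "computable1 f \<Longrightarrow> (\<And>x. f x = g x) \<Longrightarrow> computable1 g"
  by (metis ext)

definition decidable :: "(nat \<Rightarrow> bool) \<Rightarrow> bool" where "decidable P \<longleftrightarrow> computable1 (\<lambda>x. if P x then 1 else 0)"

lemma decidable_eqI: assumes "computable1 a" "computable1 b" shows "decidable (\<lambda>x. a x = b x)"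
  unfolding decidable_def
  by (rule computable1_ext[of "\<lambda>x. 1 - ((a x - b x) + (b x - a x))"], intro computable1_arith_intros assms, auto)

lemma decidable_lessI: assumes "computable1 a" "computable1 b" shows "decidable (\<lambda>x. a x < b x)"
  unfolding decidable_def
  by (rule computable1_ext[of "\<lambda>x. 1 - (1 - (b x - a x))"], intro computable1_arith_intros assms, simp)

lemma decidable_notI: assumes "decidable P" shows "decidable (\<lambda>x. \<not> P x)"
  unfolding decidable_def
  by (rule computable1_ext[of "\<lambda>x. 1 - (if P x then 1 else 0)"], intro computable1_arith_intros assms[unfolded decidable_def], simp)

lemma decidable_conjI: assumes "decidable P" "decidable Q" shows "decidable (\<lambda>x. P x \<and> Q x)"
  unfolding decidable_def
  by (rule computable1_ext[of "\<lambda>x. (if P x then 1 else 0) * (if Q x then 1 else 0)"],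
    intro computable1_arith_intros assms[unfolded decidable_def], simp)

lemma decidable_disjI: assumes "decidable P" "decidable Q" shows "decidable (\<lambda>x. P x \<or> Q x)"
  unfolding decidable_def
  by (rule computable1_ext[of "\<lambda>x. 1 - (1 - ((if P x then 1 else 0) + (if Q x then 1 else 0)))"],
    intro computable1_arith_intros assms[unfolded decidable_def], simp)

lemma computable1_ifI: assumes "decidable P" "computable1 a" "computable1 b" shows "computable1 (\<lambda>x. if P x then a x else b x)"
  by (rule computable1_ext[of "\<lambda>x. (if P x then 1 else 0) * a x + (1 - (if P x then 1 else 0)) * b x"],
    intro computable1_arith_intros assms(2,3) assms(1)[unfolded decidable_def], simp)

lemma decidable_compose: "decidable P \<Longrightarrow> computable1 a \<Longrightarrow> decidable (\<lambda>x. P (a x))"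
  unfolding decidable_def by (rule computable1_compose1)

lemma decidable_bexI:
  assumes Q: "decidable (\<lambda>p. Q (pfst p) (psnd p))" and b: "computable1 b"
  shows "decidable (\<lambda>x. \<exists>m<b x. Q m x)"
proof -
  let ?G = "\<lambda>y k x. if y = 1 \<or> Q k x then 1 else (0::nat)"
  have "computable1 (\<lambda>x. prim_rec (\<lambda>x. 0) ?G (b x) x)"
  proof (rule computable1_prim_recI[OF computable1_constI _ b computable1_idI])
    have "decidable (\<lambda>t. pfst t = 1 \<or> Q (pfst (psnd t)) (psnd (psnd t)))"
      by (intro decidable_disjI decidable_eqI computable1_arith_intros decidable_compose[OF Q, of psnd])
    then show "computable1 (\<lambda>t. ?G (pfst t) (pfst (psnd t)) (psnd (psnd t)))" unfolding decidable_def by simp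
  qed
  moreover have "prim_rec (\<lambda>x. 0) ?G k x = (if \<exists>m<k. Q m x then 1 else 0)" for k x
    by (induction k) (auto simp: less_Suc_eq)
  ultimately show ?thesis unfolding decidable_def by simp
qed

lemma decidable_ballI:
  assumes Q: "decidable (\<lambda>p. Q (pfst p) (psnd p))" and b: "computable1 b"
  shows "decidable (\<lambda>x. \<forall>m<b x. Q m x)"
proof -
  have "decidable (\<lambda>x. \<not> (\<exists>m<b x. \<not> Q m x))"
    by (rule decidable_notI, rule decidable_bexI[OF _ b], rule decidable_notI[OF Q])
  then show ?thesis by simp
qed

lemma computable1_sumI:
  assumes f: "computable1 (\<lambda>p. f (pfst p) (psnd p))" and b: "computable1 b"
  shows "computable1 (\<lambda>x. \<Sum>m<b x. f m x)"
proof -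
  let ?G = "\<lambda>y k x. y + f k x"
  have "computable1 (\<lambda>x. prim_rec (\<lambda>x. 0) ?G (b x) x)"
  proof (rule computable1_prim_recI[OF computable1_constI _ b computable1_idI])
    show "computable1 (\<lambda>t. ?G (pfst t) (pfst (psnd t)) (psnd (psnd t)))"
      by (intro computable1_addI computable1_pfstI computable1_idI computable1_compose1[OF f, of psnd]
          computable1_psndI)
  qed
  moreover have "prim_rec (\<lambda>x. 0) ?G k x = (\<Sum>m<k. f m x)" for k x
    by (induction k) auto
  ultimately show ?thesis by simp
qed

lemma computable1_iterI:
  assumes f: "computable1 f" and a: "computable1 a" and b: "computable1 b"
  shows "computable1 (\<lambda>x. (f ^^ a x) (b x))"
proof -
  let ?G = "\<lambda>y k x. f y"
  have "computable1 (\<lambda>x. prim_rec (\<lambda>x. x) ?G (a x) (b x))"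
    by (rule computable1_prim_recI[OF computable1_idI _ a b]) (intro computable1_compose1[OF f] computable1_pfstI computable1_idI)
  moreover have "prim_rec (\<lambda>x. x) ?G k x = (f ^^ k) x" for k x
    by (induction k) auto
  ultimately show ?thesis by simp
qed

definition bleast :: "(nat \<Rightarrow> bool) \<Rightarrow> nat \<Rightarrow> nat" where
  "bleast P b = (if \<exists>m<b. P m then LEAST m. P m else b)"

lemma bleast_eq: "\<exists>m<b. P m \<Longrightarrow> bleast P b = (LEAST m. P m)"
  unfolding bleast_def by auto

lemma bleast_Suc: "bleast P (Suc k) = (if bleast P k < k then bleast P k else if P k then k else Suc k)"
proof (cases "\<exists>m<k. P m")
  case True
  then obtain m where "m < k" "P m" by blast
  then have "(LEAST m. P m) < k" using Least_le[of P m] by linarith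
  moreover have "\<exists>m<Suc k. P m" using \<open>m < k\<close> \<open>P m\<close> less_SucI by blast
  ultimately show ?thesis using True by (simp add: bleast_def)
next
  case False
  then have "(\<exists>m<Suc k. P m) = P k" by (auto simp: less_Suc_eq)
  moreover have "P k \<Longrightarrow> (LEAST m. P m) = k" using False by (intro Least_equality) (auto simp: not_less[symmetric])
  ultimately show ?thesis using False by (auto simp: bleast_def)
qed

lemma computable1_bleastI:
  assumes Q: "decidable (\<lambda>p. Q (pfst p) (psnd p))" and b: "computable1 b"
  shows "computable1 (\<lambda>x. bleast (\<lambda>m. Q m x) (b x))"
proof -
  let ?G = "\<lambda>y k x. if y < k then y else if Q k x then k else Suc k"
  have "computable1 (\<lambda>x. prim_rec (\<lambda>x. 0) ?G (b x) x)"
  proof (rule computable1_prim_recI[OF computable1_constI _ b computable1_idI])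
    show "computable1 (\<lambda>t. ?G (pfst t) (pfst (psnd t)) (psnd (psnd t)))"
      by (intro computable1_ifI decidable_lessI computable1_SucI computable1_pfstI computable1_psndI
          computable1_idI decidable_compose[OF Q, of psnd])
  qed
  moreover have "prim_rec (\<lambda>x. 0) ?G k x = bleast (\<lambda>m. Q m x) k" for k x
    by (induction k) (simp_all add: bleast_Suc, simp add: bleast_def)
  ultimately show ?thesis by simp
qed

lemma recf_of_computable1_pair:
  assumes "computable1 (\<lambda>p. F (pfst p) (psnd p))"
  shows "\<exists>r. \<forall>x y. eval r [x, y] (F x y)"
proof -
  have "computable 2 (\<lambda>xs. (\<lambda>p. F (pfst p) (psnd p)) (pair (xs!0) (xs!1)))"
    by (rule computable_compose1[OF assms]) (intro computable_compose2[OF computable2_pair] computable_proj, simp_all)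
  then obtain r where "\<forall>xs. length xs = 2 \<longrightarrow> eval r xs (F (xs!0) (xs!1))" unfolding computable_def by auto
  then show ?thesis by (intro exI[of _ r] allI) (drule spec[of _ "[_, _]"], simp)
qed

definition lhd :: "nat \<Rightarrow> nat" where "lhd c = pfst (c - 1)"
definition ltl :: "nat \<Rightarrow> nat" where "ltl c = (if c = 0 then 0 else psnd (c - 1))"
definition lcons :: "nat \<Rightarrow> nat \<Rightarrow> nat" where "lcons a c = Suc (pair a c)"
definition llen :: "nat \<Rightarrow> nat" where "llen c = length (list_decode c)"
definition lnth :: "nat \<Rightarrow> nat \<Rightarrow> nat" where
  "lnth c k = (if k < llen c then list_decode c ! k else 0)"

lemma list_decode_Suc: "list_decode (Suc n) = pfst n # list_decode (psnd n)"
  by (simp add: pfst_def psnd_def split: prod.split)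

declare list_decode.simps(2)[simp del]
declare list_decode_Suc[simp]

lemma list_encode_cons: "list_encode (x # xs) = lcons x (list_encode xs)"
  by (simp add: lcons_def pair_def)

lemma list_decode_lcons[simp]: "list_decode (lcons a c) = a # list_decode c"
  by (simp add: lcons_def list_decode_Suc)

lemma list_decode_ltl: "list_decode (ltl c) = tl (list_decode c)"
  by (cases c) (auto simp: ltl_def list_decode_Suc)

lemma list_decode_lhd: "list_decode c \<noteq> [] \<Longrightarrow> lhd c = hd (list_decode c)"
  by (cases c) (auto simp: lhd_def list_decode_Suc)

lemma list_decode_iter_ltl: "list_decode ((ltl ^^ k) c) = drop k (list_decode c)"
  by (induction k) (auto simp: list_decode_ltl drop_Suc tl_drop)

lemma length_le_list_encode: "length xs \<le> list_encode xs"
proof (induction xs)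
  case (Cons x xs)
  then show ?case using le_prod_encode_2[of "list_encode xs" x] by simp
qed simp

lemma llen_le: "llen c \<le> c"
  unfolding llen_def using length_le_list_encode[of "list_decode c"] by simp

lemma iter_ltl_zero: "(ltl ^^ k) c = 0 \<longleftrightarrow> llen c \<le> k"
proof -
  have "(ltl ^^ k) c = 0 \<longleftrightarrow> list_decode ((ltl ^^ k) c) = []"
    by (metis list_decode.simps(1) list_decode_inverse list_encode.simps(1))
  then show ?thesis by (simp add: list_decode_iter_ltl llen_def)
qed

lemma llen_bleast: "llen c = bleast (\<lambda>k. (ltl ^^ k) c = 0) (Suc c)"
proof -
  have ex: "\<exists>m<Suc c. (ltl ^^ m) c = 0" using llen_le[of c] iter_ltl_zero[of "llen c" c] by (intro exI[of _ "llen c"]) auto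
  have "(LEAST k. (ltl ^^ k) c = 0) = llen c"
    by (rule Least_equality) (auto simp: iter_ltl_zero)
  then show ?thesis using bleast_eq[OF ex] by simp
qed

lemma lnth_formula: "lnth c k = (if k < llen c then lhd ((ltl ^^ k) c) else 0)"
proof (cases "k < llen c")
  case True
  then have "list_decode ((ltl ^^ k) c) \<noteq> []" by (simp add: list_decode_iter_ltl llen_def)
  then have "lhd ((ltl ^^ k) c) = hd (drop k (list_decode c))"
    by (simp add: list_decode_lhd list_decode_iter_ltl)
  also have "\<dots> = list_decode c ! k" using True by (simp add: llen_def hd_drop_conv_nth)
  finally show ?thesis using True by (simp add: lnth_def)
qed (simp add: lnth_def)

lemma computable1_ltl: "computable1 ltl"
  unfolding ltl_def
  by (intro computable1_ifI decidable_eqI computable1_psndI computable1_subI computable1_idI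
      computable1_constI)

lemma computable1_lhd: "computable1 lhd"
  unfolding lhd_def by (intro computable1_pfstI computable1_subI computable1_idI computable1_constI)

lemma computable1_ltlI: "computable1 a \<Longrightarrow> computable1 (\<lambda>x. ltl (a x))"
  by (rule computable1_compose1[OF computable1_ltl])

lemma computable1_lhdI: "computable1 a \<Longrightarrow> computable1 (\<lambda>x. lhd (a x))"
  by (rule computable1_compose1[OF computable1_lhd])

lemma computable1_lconsI: "computable1 a \<Longrightarrow> computable1 b \<Longrightarrow> computable1 (\<lambda>x. lcons (a x) (b x))"
  unfolding lcons_def by (intro computable1_SucI computable1_pairI)

lemma computable1_llen: "computable1 llen"
proof -
  have "computable1 (\<lambda>x. bleast (\<lambda>k. (ltl ^^ k) x = 0) (Suc x))"
    by (intro computable1_bleastI decidable_eqI computable1_iterI computable1_ltl computable1_pfstI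
        computable1_psndI computable1_constI computable1_SucI computable1_idI)
  then show ?thesis by (simp add: llen_bleast[symmetric])
qed

lemma computable1_llenI: "computable1 a \<Longrightarrow> computable1 (\<lambda>x. llen (a x))"
  by (rule computable1_compose1[OF computable1_llen])

lemma computable1_lnthI: assumes "computable1 a" "computable1 b" shows "computable1 (\<lambda>x. lnth (a x) (b x))"
  unfolding lnth_formula
  by (intro computable1_ifI decidable_lessI computable1_llenI computable1_lhdI computable1_iterI
      computable1_ltl computable1_constI assms)

lemma llen_encode[simp]: "llen (list_encode xs) = length xs" by (simp add: llen_def)
lemma lnth_encode[simp]: "k < length xs \<Longrightarrow> lnth (list_encode xs) k = xs ! k" by (simp add: lnth_def)

fun str_decode :: "nat \<Rightarrow> bool list" where
  "str_decode 0 = []"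
| "str_decode (Suc k) = odd k # str_decode (k div 2)"

lemma str_code_decode[simp]: "str_code (str_decode n) = n"
  by (induction n rule: str_decode.induct) auto

lemma str_decode_code[simp]: "str_decode (str_code s) = s"
proof (induction s)
  case (Cons b s)
  show ?case
  proof (cases b)
    case True
    then have "str_code (b # s) = Suc (Suc (2 * str_code s))" by simp
    then show ?thesis using Cons True by (simp del: str_code.simps)
  next
    case False
    then have "str_code (b # s) = Suc (2 * str_code s)" by simp
    then show ?thesis using Cons False by (simp del: str_code.simps)
  qed
qed simp

lemma str_code_inj: "str_code s = str_code t \<longleftrightarrow> s = t"
  by (metis str_decode_code)

lemma str_code_append: "str_code (s @ t) = str_code s + 2 ^ length s * str_code t"
  by (induction s) (auto simp: algebra_simps)

lemma str_code_bounds: "2 ^ length s - 1 \<le> str_code s \<and> str_code s < 2 ^ (length s + 1) - 1"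
proof (induction s)
  case (Cons b s)
  then show ?case by (cases b) (auto simp: algebra_simps)
qed simp

definition code_length :: "nat \<Rightarrow> nat" where "code_length n = length (str_decode n)"

lemma code_length_bleast: "code_length n = bleast (\<lambda>k. n < 2 ^ (k + 1) - 1) (Suc n)"
proof -
  let ?s = "str_decode n"
  have b: "2 ^ length ?s - 1 \<le> n" "n < 2 ^ (length ?s + 1) - 1"
    using str_code_bounds[of ?s] by auto
  have lt: "length ?s < Suc n"
  proof -
    have "length ?s < 2 ^ length ?s" by (rule less_exp)
    then show ?thesis using b(1) by linarith
  qed
  have ex: "\<exists>m<Suc n. n < 2 ^ (m + 1) - 1" using lt b(2) by blast
  have "(LEAST k. n < 2 ^ (k + 1) - 1) = length ?s"
  proof (rule Least_equality)
    show "n < 2 ^ (length ?s + 1) - 1" by (rule b(2))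
  next
    fix y assume "n < 2 ^ (y + 1) - 1"
    show "length ?s \<le> y"
    proof (rule ccontr)
      assume "\<not> length ?s \<le> y"
      then have "y + 1 \<le> length ?s" by simp
      then have "(2::nat) ^ (y + 1) \<le> 2 ^ length ?s" by (rule power_increasing) simp
      then show False using b(1) \<open>n < 2 ^ (y + 1) - 1\<close> by linarith
    qed
  qed
  then show ?thesis using bleast_eq[OF ex] by (simp add: code_length_def)
qed

lemma computable1_code_length: "computable1 code_length"
proof -
  have "computable1 (\<lambda>x. bleast (\<lambda>k. x < 2 ^ (k + 1) - 1) (Suc x))"
    by (intro computable1_bleastI decidable_lessI computable1_subI computable1_pow2I
        computable1_addI computable1_pfstI computable1_psndI computable1_constI computable1_SucI
        computable1_idI)
  then show ?thesis using code_length_bleast by presburger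
qed

definition code_prefix :: "nat \<Rightarrow> nat \<Rightarrow> bool" where
  "code_prefix a b \<longleftrightarrow> (\<exists>c<Suc b. b = a + 2 ^ code_length a * c)"

lemma code_prefix_iff: "code_prefix (str_code s) (str_code t) \<longleftrightarrow> prefix s t"
  unfolding prefix_def
proof
  assume "code_prefix (str_code s) (str_code t)"
  then obtain c where "str_code t = str_code s + 2 ^ length s * c"
    by (auto simp: code_prefix_def code_length_def)
  then have "str_code t = str_code (s @ str_decode c)" by (simp add: str_code_append)
  then show "\<exists>u. t = s @ u" by (auto simp: str_code_inj)
next
  assume "\<exists>u. t = s @ u"
  then obtain u where t: "t = s @ u" by blast
  have "str_code u \<le> 2 ^ length s * str_code u" by simp
  then have "str_code u < Suc (str_code s + 2 ^ length s * str_code u)" by linarith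
  then show "code_prefix (str_code s) (str_code t)"
    unfolding code_prefix_def code_length_def t str_decode_code str_code_append by (intro exI[of _ "str_code u"]) auto
qed

lemma decidable_code_prefixI: assumes "computable1 a" "computable1 b" shows "decidable (\<lambda>x. code_prefix (a x) (b x))"
  unfolding code_prefix_def
  by (intro decidable_bexI decidable_eqI computable1_addI computable1_multI computable1_pow2I
      computable1_compose1[OF computable1_code_length] computable1_SucI computable1_pfstI
      computable1_psndI computable1_idI assms computable1_compose1[OF assms(1)]
      computable1_compose1[OF assms(2)])

section \<open>Certificates of halting computations\<close>

text \<open>An entry \<open>cert_entry c xs v\<close> claims that the program with code \<open>c\<close> returns \<open>v\<close> on input
  \<open>xs\<close>. \<open>entry_ok E c a v\<close> says that the claim follows by one rule of \<^const>\<open>eval\<close> from claims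
  found by \<open>E\<close>, where \<open>E P\<close> asserts that some earlier entry satisfies \<open>P\<close>. In a coded list \<open>E\<close> is
  a bounded search, which makes certificates decidable; in an explicit list it is membership.\<close>

primrec recf_code :: "recf \<Rightarrow> nat" where
  "recf_code Zero = pair 0 0"
| "recf_code Succ = pair 1 0"
| "recf_code (Proj i) = pair 2 i"
| "recf_code (Comp f gs) = pair 3 (pair (recf_code f) (list_encode (map recf_code gs)))"
| "recf_code (Prim f g) = pair 4 (pair (recf_code f) (recf_code g))"
| "recf_code (Mini f) = pair 5 (recf_code f)"

definition cert_entry :: "nat \<Rightarrow> nat list \<Rightarrow> nat \<Rightarrow> nat" where
  "cert_entry c xs v = pair c (pair (list_encode xs) v)"

definition entry_ok :: "((nat \<Rightarrow> bool) \<Rightarrow> bool) \<Rightarrow> nat \<Rightarrow> nat \<Rightarrow> nat \<Rightarrow> bool" where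
 "entry_ok E c a v \<longleftrightarrow>
   (pfst c = 0 \<and> v = 0) \<or>
   (pfst c = 1 \<and> 0 < llen a \<and> v = Suc (lhd a)) \<or>
   (pfst c = 2 \<and> psnd c < llen a \<and> v = lnth a (psnd c)) \<or>
   (pfst c = 3 \<and> E (\<lambda>l'. pfst l' = pfst (psnd c) \<and> psnd (psnd l') = v \<and> llen (pfst (psnd l')) = llen (psnd (psnd c)) \<and>
        (\<forall>k<llen (psnd (psnd c)). E (\<lambda>l''. l'' = pair (lnth (psnd (psnd c)) k) (pair a (lnth (pfst (psnd l')) k)))))) \<or>
   (pfst c = 4 \<and> 0 < llen a \<and> lhd a = 0 \<and> E (\<lambda>l'. l' = pair (pfst (psnd c)) (pair (ltl a) v))) \<or>
   (pfst c = 4 \<and> 0 < llen a \<and> 0 < lhd a \<and> E (\<lambda>l'. pfst l' = c \<and> pfst (psnd l') = lcons (lhd a - 1) (ltl a) \<and>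
        E (\<lambda>l''. l'' = pair (psnd (psnd c)) (pair (lcons (psnd (psnd l')) (lcons (lhd a - 1) (ltl a))) v)))) \<or>
   (pfst c = 5 \<and> E (\<lambda>l'. l' = pair (psnd c) (pair (lcons v a) 0)) \<and>
        (\<forall>m<v. E (\<lambda>l'. pfst l' = psnd c \<and> pfst (psnd l') = lcons m a \<and> 0 < psnd (psnd l'))))"

definition entry_justified :: "((nat \<Rightarrow> bool) \<Rightarrow> bool) \<Rightarrow> nat \<Rightarrow> bool" where
  "entry_justified E l \<longleftrightarrow> entry_ok E (pfst l) (pfst (psnd l)) (psnd (psnd l))"

definition valid_cert :: "nat \<Rightarrow> bool" where
  "valid_cert L \<longleftrightarrow> (\<forall>j<llen L. entry_justified (\<lambda>P. \<exists>j'<j. P (lnth L j')) (lnth L j))"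

lemma decidable_valid_cert: "decidable valid_cert"
  unfolding valid_cert_def entry_justified_def entry_ok_def
  by (intro decidable_ballI decidable_bexI decidable_disjI decidable_conjI decidable_eqI
      decidable_lessI computable1_llenI computable1_lnthI computable1_lhdI computable1_ltlI
      computable1_lconsI computable1_pairI
      computable1_pfstI computable1_psndI computable1_SucI computable1_subI computable1_constI computable1_idI)

declare list_encode.simps(2)[simp del]
declare list_encode_cons[simp]

lemma lhd_lcons[simp]: "lhd (lcons a c) = a" by (simp add: lhd_def lcons_def)
lemma ltl_lcons[simp]: "ltl (lcons a c) = c" by (simp add: ltl_def lcons_def)
lemma llen_lcons[simp]: "llen (lcons a c) = Suc (llen c)" by (simp add: llen_def)
lemma pfst_cert_entry[simp]: "pfst (cert_entry c xs v) = c" and pfst_psnd_cert_entry[simp]: "pfst (psnd (cert_entry c xs v)) = list_encode xs"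
  and psnd_psnd_cert_entry[simp]: "psnd (psnd (cert_entry c xs v)) = v"
  by (simp_all add: cert_entry_def)

lemma cert_entry_decomp: "l = cert_entry (pfst l) (list_decode (pfst (psnd l))) (psnd (psnd l))"
  by (simp add: cert_entry_def)

definition entry_sound :: "nat \<Rightarrow> bool" where
  "entry_sound l \<longleftrightarrow> (\<forall>r xs v. l = cert_entry (recf_code r) xs v \<longrightarrow> eval r xs v)"

lemma entry_sound_eval:
  assumes "entry_sound l" "pfst l = recf_code r" "pfst (psnd l) = list_encode xs"
  shows "eval r xs (psnd (psnd l))"
proof -
  have "l = cert_entry (recf_code r) xs (psnd (psnd l))"
    using cert_entry_decomp[of l] assms(2,3) by simp
  then show ?thesis using assms(1) unfolding entry_sound_def by blast
qed

lemma entry_ok_sound: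
  assumes ok: "entry_ok E (recf_code r) (list_encode xs) v"
    and E: "\<And>P. E P \<Longrightarrow> \<exists>l. P l \<and> entry_sound l"
  shows "eval r xs v"
proof (cases r)
  case Zero
  then show ?thesis using ok by (simp add: entry_ok_def eval_zero)
next
  case Succ
  then have "0 < length xs" "v = Suc (lhd (list_encode xs))" using ok by (simp_all add: entry_ok_def)
  then obtain x xs' where "xs = x # xs'" by (cases xs) auto
  then show ?thesis using Succ \<open>v = _\<close> by (simp add: eval_succ)
next
  case (Proj i)
  then have "i < length xs" "v = xs ! i" using ok by (simp_all add: entry_ok_def)
  then show ?thesis using Proj by (simp add: eval_proj)
next
  case (Comp f gs)
  let ?gc = "list_encode (map recf_code gs)"
  have "E (\<lambda>l'. pfst l' = recf_code f \<and> psnd (psnd l') = v \<and> llen (pfst (psnd l')) = length gs \<and>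
        (\<forall>k<length gs. E (\<lambda>l''. l'' = pair (lnth ?gc k) (pair (list_encode xs) (lnth (pfst (psnd l')) k)))))"
    using ok Comp by (simp add: entry_ok_def)
  then obtain l where l: "pfst l = recf_code f" "psnd (psnd l) = v" "llen (pfst (psnd l)) = length gs"
    "\<forall>k<length gs. E (\<lambda>l''. l'' = pair (lnth ?gc k) (pair (list_encode xs) (lnth (pfst (psnd l)) k)))"
    and "entry_sound l"
    using E by blast
  define ys where "ys = list_decode (pfst (psnd l))"
  have eval_f: "eval f ys v"
    using entry_sound_eval[OF \<open>entry_sound l\<close> l(1), of ys] l(2) by (simp add: ys_def)
  have len: "length ys = length gs" using l(3) by (simp add: ys_def llen_def)
  have "eval (gs ! k) xs (ys ! k)" if k: "k < length gs" for k
  proof -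
    have "lnth (pfst (psnd l)) k = ys ! k" using k len by (simp add: ys_def lnth_def llen_def)
    moreover have "lnth ?gc k = recf_code (gs ! k)" using k by simp
    ultimately have "E (\<lambda>l''. l'' = cert_entry (recf_code (gs ! k)) xs (ys ! k))"
      using l(4) k unfolding cert_entry_def by metis
    then show ?thesis using E unfolding entry_sound_def by blast
  qed
  then have "list_all2 (\<lambda>g y. eval g xs y) gs ys" using len by (simp add: list_all2_conv_all_nth)
  then show ?thesis using Comp eval_f by (simp add: eval_comp)
next
  case (Prim f g)
  have "0 < length xs" using ok Prim by (auto simp: entry_ok_def)
  then obtain x xs' where xs: "xs = x # xs'" by (cases xs) auto
  show ?thesis
  proof (cases x)
    case 0
    then have "E (\<lambda>l'. l' = cert_entry (recf_code f) xs' v)"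
      using ok Prim xs by (simp add: entry_ok_def cert_entry_def)
    then have "eval f xs' v" using E unfolding entry_sound_def by blast
    then show ?thesis using Prim xs 0 by (simp add: eval_prim0)
  next
    case (Suc n)
    then have "E (\<lambda>l'. pfst l' = recf_code (Prim f g) \<and> pfst (psnd l') = list_encode (n # xs') \<and>
        E (\<lambda>l''. l'' = cert_entry (recf_code g) (psnd (psnd l') # n # xs') v))"
      using ok Prim xs by (simp add: entry_ok_def cert_entry_def)
    then obtain l where l: "pfst l = recf_code (Prim f g)" "pfst (psnd l) = list_encode (n # xs')"
      "E (\<lambda>l''. l'' = cert_entry (recf_code g) (psnd (psnd l) # n # xs') v)" and "entry_sound l"
      using E by blast
    have "eval (Prim f g) (n # xs') (psnd (psnd l))"
      using entry_sound_eval[OF \<open>entry_sound l\<close> l(1,2)] .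
    moreover have "eval g (psnd (psnd l) # n # xs') v"
      using l(3) E unfolding entry_sound_def by blast
    ultimately show ?thesis using Prim xs Suc by (simp add: eval_primS)
  qed
next
  case (Mini f)
  have "E (\<lambda>l'. l' = cert_entry (recf_code f) (v # xs) 0)"
    using ok Mini by (simp add: entry_ok_def cert_entry_def)
  then have "eval f (v # xs) 0" using E unfolding entry_sound_def by blast
  moreover have "\<exists>k. eval f (m # xs) (Suc k)" if "m < v" for m
  proof -
    have "E (\<lambda>l'. pfst l' = recf_code f \<and> pfst (psnd l') = list_encode (m # xs) \<and> 0 < psnd (psnd l'))"
      using ok Mini \<open>m < v\<close> by (simp add: entry_ok_def)
    then obtain l where l: "pfst l = recf_code f" "pfst (psnd l) = list_encode (m # xs)" "0 < psnd (psnd l)"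
      and "entry_sound l"
      using E by blast
    then show ?thesis using entry_sound_eval[OF \<open>entry_sound l\<close> l(1,2)] by (metis Suc_pred)
  qed
  ultimately show ?thesis using Mini by (simp add: eval_mini)
qed

lemma valid_cert_sound:
  assumes "valid_cert L" "j < llen L" "lnth L j = cert_entry (recf_code r) xs v"
  shows "eval r xs v"
  using assms(2,3)
proof (induction j arbitrary: r xs v rule: less_induct)
  case (less j)
  have ok: "entry_ok (\<lambda>P. \<exists>j'<j. P (lnth L j')) (recf_code r) (list_encode xs) v"
    using assms(1) less.prems unfolding valid_cert_def entry_justified_def by (metis pfst_cert_entry pfst_psnd_cert_entry psnd_psnd_cert_entry)
  show ?case
  proof (rule entry_ok_sound[OF ok])
    fix P assume "\<exists>j'<j. P (lnth L j')"
    then obtain j' where j': "j' < j" "P (lnth L j')" by blast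
    show "\<exists>l. P l \<and> entry_sound l"
      using j' less.IH less.prems(1) by (intro exI[of _ "lnth L j'"]) (auto simp: entry_sound_def)
  qed
qed

abbreviation exists_in :: "nat set \<Rightarrow> (nat \<Rightarrow> bool) \<Rightarrow> bool" where "exists_in S \<equiv> (\<lambda>P. \<exists>l\<in>S. P l)"

definition valid_entries :: "nat list \<Rightarrow> bool" where
  "valid_entries ls \<longleftrightarrow> (\<forall>j<length ls. entry_justified (exists_in (set (take j ls))) (ls!j))"

lemma valid_cert_encode: "valid_cert (list_encode ls) \<longleftrightarrow> valid_entries ls"
proof -
  have "(\<lambda>P. \<exists>j'<j. P (lnth (list_encode ls) j')) = exists_in (set (take j ls))" if "j < length ls" for j
  proof (rule ext)
    fix P
    have "(\<exists>j'<j. P (lnth (list_encode ls) j')) = (\<exists>j'<j. P (ls ! j'))"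
      using that by (metis lnth_encode order.strict_trans)
    also have "\<dots> = (\<exists>l\<in>set (take j ls). P l)"
    proof
      assume "\<exists>j'<j. P (ls ! j')"
      then obtain j' where "j' < j" "P (ls ! j')" by blast
      then show "\<exists>l\<in>set (take j ls). P l" using that
        by (intro bexI[of _ "ls ! j'"]) (auto simp: in_set_conv_nth intro!: exI[of _ j'])
    next
      assume "\<exists>l\<in>set (take j ls). P l"
      then obtain i where "i < length (take j ls)" "P (take j ls ! i)" by (auto simp: in_set_conv_nth)
      then show "\<exists>j'<j. P (ls ! j')" by auto
    qed
    finally show "(\<exists>j'<j. P (lnth (list_encode ls) j')) = (\<exists>l\<in>set (take j ls). P l)" .
  qed
  then show ?thesis unfolding valid_cert_def valid_entries_def by auto
qed

lemma entry_ok_mono: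
  assumes "\<And>P Q. (\<And>l. P l \<longrightarrow> Q l) \<Longrightarrow> E P \<longrightarrow> E' Q"
  shows "entry_ok E c a v \<longrightarrow> entry_ok E' c a v"
  unfolding entry_ok_def by (intro disj_mono conj_mono imp_mono imp_refl all_mono assms)

lemma entry_justified_exists_in_mono:
  "S \<subseteq> S' \<Longrightarrow> entry_justified (exists_in S) l \<Longrightarrow> entry_justified (exists_in S') l"
  unfolding entry_justified_def using entry_ok_mono[of "exists_in S" "exists_in S'"] by blast

lemma valid_entries_append: "valid_entries a \<Longrightarrow> valid_entries b \<Longrightarrow> valid_entries (a @ b)"
  unfolding valid_entries_def
proof (intro allI impI)
  fix j assume va: "\<forall>j<length a. entry_justified (exists_in (set (take j a))) (a ! j)"
    and vb: "\<forall>j<length b. entry_justified (exists_in (set (take j b))) (b ! j)"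
    and j: "j < length (a @ b)"
  show "entry_justified (exists_in (set (take j (a @ b)))) ((a @ b) ! j)"
  proof (cases "j < length a")
    case True then show ?thesis using va by (simp add: nth_append)
  next
    case False
    have "set (take (j - length a) b) \<subseteq> set (take j (a @ b))" using False by auto
    moreover have "entry_justified (exists_in (set (take (j - length a) b))) (b ! (j - length a))"
      using vb j False by simp
    ultimately show ?thesis
      using False by (simp add: nth_append entry_justified_exists_in_mono del: set_append)
  qed
qed

lemma valid_entries_snoc: "valid_entries a \<Longrightarrow> entry_justified (exists_in (set a)) l \<Longrightarrow> valid_entries (a @ [l])"
  unfolding valid_entries_def by (auto simp: nth_append less_Suc_eq)

lemma valid_entries_Nil: "valid_entries []" by (simp add: valid_entries_def)

lemma valid_entries_collect:
  fixes n :: nat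
  assumes "\<And>k. k < n \<Longrightarrow> \<exists>ls. valid_entries ls \<and> x k \<in> set ls"
  shows "\<exists>ls. valid_entries ls \<and> (\<forall>k<n. x k \<in> set ls)"
  using assms
proof (induction n)
  case 0 then show ?case using valid_entries_Nil by auto
next
  case (Suc n)
  then obtain ls where ls: "valid_entries ls" "\<forall>k<n. x k \<in> set ls" by auto
  obtain ls' where ls': "valid_entries ls'" "x n \<in> set ls'" using Suc.prems by auto
  show ?case using valid_entries_append[OF ls(1) ls'(1)] ls ls' by (intro exI[of _ "ls @ ls'"]) (auto simp: less_Suc_eq)
qed

lemma certified_if_ok:
  assumes "valid_entries ls" "entry_ok (exists_in (set ls)) c (list_encode xs) v"
  shows "\<exists>ls. valid_entries ls \<and> cert_entry c xs v \<in> set ls"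
  using valid_entries_snoc[OF assms(1), of "cert_entry c xs v"] assms(2)
  by (intro exI[of _ "ls @ [cert_entry c xs v]"]) (auto simp: entry_justified_def)

lemma eval_certified: "eval r xs v \<Longrightarrow> \<exists>ls. valid_entries ls \<and> cert_entry (recf_code r) xs v \<in> set ls"
proof (induction rule: eval.induct)
  case (eval_zero xs)
  show ?case by (rule certified_if_ok[OF valid_entries_Nil]) (simp add: entry_ok_def)
next
  case (eval_succ x xs)
  show ?case by (rule certified_if_ok[OF valid_entries_Nil]) (simp add: entry_ok_def)
next
  case (eval_proj i xs)
  show ?case by (rule certified_if_ok[OF valid_entries_Nil]) (use eval_proj in \<open>simp add: entry_ok_def\<close>)
next
  case (eval_comp xs gs ys f z)
  have len: "length ys = length gs" using eval_comp.IH(1) by (simp add: list_all2_conv_all_nth)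
  have "\<exists>ls. valid_entries ls \<and> (\<forall>k<length gs. cert_entry (recf_code (gs ! k)) xs (ys ! k) \<in> set ls)"
    by (rule valid_entries_collect) (use eval_comp.IH(1) in \<open>auto simp: list_all2_conv_all_nth\<close>)
  then obtain ls1 where ls1: "valid_entries ls1" "\<forall>k<length gs. cert_entry (recf_code (gs ! k)) xs (ys ! k) \<in> set ls1" by blast
  obtain ls2 where ls2: "valid_entries ls2" "cert_entry (recf_code f) ys z \<in> set ls2" using eval_comp.IH(2) by blast
  let ?S = "set (ls1 @ ls2)"
  show ?case
  proof (rule certified_if_ok[OF valid_entries_append[OF ls1(1) ls2(1)]])
    have A: "\<forall>k<length gs. pair (recf_code (gs ! k)) (pair (list_encode xs) (lnth (list_encode ys) k)) \<in> ?S"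
      using ls1(2) len by (auto simp: cert_entry_def)
    have B: "cert_entry (recf_code f) ys z \<in> ?S" using ls2(2) by simp
    show "entry_ok (exists_in ?S) (recf_code (Comp f gs)) (list_encode xs) z"
      using A len by (auto simp: entry_ok_def simp del: set_append intro!: bexI[OF _ B])
  qed
next
  case (eval_prim0 f xs z g)
  then obtain ls where ls: "valid_entries ls" "cert_entry (recf_code f) xs z \<in> set ls" by blast
  show ?case
    by (rule certified_if_ok[OF ls(1)]) (use ls(2) in \<open>simp add: entry_ok_def cert_entry_def\<close>)
next
  case (eval_primS f g n xs y z)
  obtain ls1 where ls1: "valid_entries ls1" "cert_entry (recf_code (Prim f g)) (n # xs) y \<in> set ls1" using eval_primS.IH(1) by blast
  obtain ls2 where ls2: "valid_entries ls2" "cert_entry (recf_code g) (y # n # xs) z \<in> set ls2" using eval_primS.IH(2) by blast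
  let ?S = "set (ls1 @ ls2)"
  have B1: "cert_entry (recf_code (Prim f g)) (n # xs) y \<in> ?S" using ls1 by simp
  have B2: "cert_entry (recf_code g) (y # n # xs) z \<in> ?S" using ls2 by simp
  show ?case
  proof (rule certified_if_ok[OF valid_entries_append[OF ls1(1) ls2(1)]])
    show "entry_ok (exists_in ?S) (recf_code (Prim f g)) (list_encode (Suc n # xs)) z"
      using B2 by (auto simp: entry_ok_def cert_entry_def simp del: set_append intro!: bexI[OF _ B1])
  qed
next
  case (eval_mini f n xs)
  obtain ls0 where ls0: "valid_entries ls0" "cert_entry (recf_code f) (n # xs) 0 \<in> set ls0" using eval_mini.IH(1) by blast
  have "\<forall>m. \<exists>k. m < n \<longrightarrow> eval f (m # xs) (Suc k) \<and> (\<exists>ls. valid_entries ls \<and> cert_entry (recf_code f) (m # xs) (Suc k) \<in> set ls)"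
    using eval_mini.IH(2) by blast
  then obtain kk where kk: "\<And>m. m < n \<Longrightarrow> \<exists>ls. valid_entries ls \<and> cert_entry (recf_code f) (m # xs) (Suc (kk m)) \<in> set ls" by metis
  obtain ls1 where ls1: "valid_entries ls1" "\<forall>m<n. cert_entry (recf_code f) (m # xs) (Suc (kk m)) \<in> set ls1"
    using valid_entries_collect[of n "\<lambda>m. cert_entry (recf_code f) (m # xs) (Suc (kk m))"] kk by blast
  let ?S = "set (ls0 @ ls1)"
  show ?case
  proof (rule certified_if_ok[OF valid_entries_append[OF ls0(1) ls1(1)]])
    have A: "\<forall>m<n. \<exists>l\<in>?S. pfst l = recf_code f \<and> pfst (psnd l) = lcons m (list_encode xs) \<and> 0 < psnd (psnd l)"
    proof (intro allI impI)
      fix m assume "m < n"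
      then have "cert_entry (recf_code f) (m # xs) (Suc (kk m)) \<in> ?S" using ls1(2) by simp
      then show "\<exists>l\<in>?S. pfst l = recf_code f \<and> pfst (psnd l) = lcons m (list_encode xs) \<and> 0 < psnd (psnd l)"
        by (intro bexI) simp_all
    qed
    have B: "cert_entry (recf_code f) (n # xs) 0 \<in> ?S" using ls0 by simp
    show "entry_ok (exists_in ?S) (recf_code (Mini f)) (list_encode xs) n"
      using A B by (simp add: entry_ok_def cert_entry_def)
  qed
qed

lemma eval_iff_certificate: "(\<exists>v. eval r xs v)
  \<longleftrightarrow> (\<exists>L. valid_cert L \<and> (\<exists>j<llen L. pfst (lnth L j) = recf_code r \<and> pfst (psnd (lnth L j)) = list_encode xs))"
proof
  assume "\<exists>v. eval r xs v"
  then obtain v where "eval r xs v" by blast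
  from eval_certified[OF this] obtain ls where ls: "valid_entries ls" "cert_entry (recf_code r) xs v \<in> set ls" by blast
  then obtain j where "j < length ls" "ls ! j = cert_entry (recf_code r) xs v" by (auto simp: in_set_conv_nth)
  then show "\<exists>L. valid_cert L \<and> (\<exists>j<llen L. pfst (lnth L j) = recf_code r \<and> pfst (psnd (lnth L j)) = list_encode xs)"
    using ls(1) by (intro exI[of _ "list_encode ls"]) (auto simp: valid_cert_encode)
next
  assume "\<exists>L. valid_cert L \<and> (\<exists>j<llen L. pfst (lnth L j) = recf_code r \<and> pfst (psnd (lnth L j)) = list_encode xs)"
  then obtain L j where L: "valid_cert L" "j < llen L" "pfst (lnth L j) = recf_code r" "pfst (psnd (lnth L j)) = list_encode xs" by blast
  have "lnth L j = cert_entry (recf_code r) xs (psnd (psnd (lnth L j)))" using cert_entry_decomp[of "lnth L j"] L(3,4) by simp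
  then show "\<exists>v. eval r xs v" using valid_cert_sound[OF L(1,2)] by blast
qed

text \<open>\<open>halting_witness e (pair L m)\<close>: the certificate \<open>L\<close> shows that program \<open>e\<close> halts on input
  \<open>[e + 3, m]\<close>, i.e. that \<open>str_decode m\<close> lies in level \<open>e + 3\<close> of the test enumerated by \<open>e\<close>.\<close>

definition halting_witness :: "nat \<Rightarrow> nat \<Rightarrow> bool" where
  "halting_witness e n \<longleftrightarrow> valid_cert (pfst n) \<and> (\<exists>j<llen (pfst n). pfst (lnth (pfst n) j) = e \<and>
      pfst (psnd (lnth (pfst n) j)) = lcons (e + 3) (lcons (psnd n) 0))"

lemma decidable_halting_witness: "decidable (\<lambda>p. halting_witness (pfst p) (psnd p))"
  unfolding halting_witness_def
  by (intro decidable_conjI decidable_compose[OF decidable_valid_cert] decidable_bexI decidable_eqI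
      computable1_llenI computable1_lnthI computable1_lconsI computable1_pfstI computable1_psndI
      computable1_addI computable1_constI computable1_idI)

lemma decidable_halting_witnessI: assumes "computable1 a" "computable1 b" shows "decidable (\<lambda>x. halting_witness (a x) (b x))"
  using decidable_compose[OF decidable_halting_witness computable1_pairI[OF assms]] by simp

lemma halting_witness_iff_eval: "(\<exists>L. halting_witness (recf_code r) (pair L m)) \<longleftrightarrow> (\<exists>v. eval r [recf_code r + 3, m] v)"
  unfolding eval_iff_certificate halting_witness_def by (simp add: list_encode_cons)

lemma halting_witness_eval: "halting_witness (recf_code r) n \<Longrightarrow> \<exists>v. eval r [recf_code r + 3, psnd n] v"
  using halting_witness_iff_eval[of r "psnd n"] by (metis pair_pfst_psnd)

section \<open>Semi-measures made of weighted atoms\<close>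

definition weight :: "nat \<Rightarrow> real" where "weight e = (1/2) ^ (e + 2)"

definition atom_weight :: "nat set \<Rightarrow> (nat \<Rightarrow> bool list) \<Rightarrow> bool list \<Rightarrow> nat \<Rightarrow> real" where
  "atom_weight D \<tau> s e = (if e \<in> D \<and> prefix s (\<tau> e) then weight e else 0)"

text \<open>The atoms have total weight at most \<open>1/2\<close>, so the root gets the value \<open>1\<close> separately.\<close>

definition atomic_rho :: "nat set \<Rightarrow> (nat \<Rightarrow> bool list) \<Rightarrow> bool list \<Rightarrow> real" where
  "atomic_rho D \<tau> s = (if s = [] then 1 else \<Sum>e. atom_weight D \<tau> s e)"

lemma weight_pos: "0 < weight e"
  by (simp add: weight_def)

lemma weight_sums: "weight sums (1/2)"
proof -
  have "(\<lambda>e. (1/4) * (1/2::real) ^ e) sums ((1/4) * (1 / (1 - 1/2)))"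
    by (intro sums_mult geometric_sums) simp
  moreover have "weight = (\<lambda>e. (1/4) * (1/2::real) ^ e)"
    by (rule ext) (simp add: weight_def power_add)
  ultimately show ?thesis by simp
qed

lemma weight_summable: "summable weight"
  using weight_sums by (rule sums_summable)

lemma weight_suminf: "(\<Sum>e. weight e) = 1/2"
  using weight_sums by (rule sums_unique[symmetric])

lemma atom_weight_nonneg: "0 \<le> atom_weight D \<tau> s e"
  and atom_weight_le: "atom_weight D \<tau> s e \<le> weight e"
  using weight_pos[of e] by (auto simp: atom_weight_def)

lemma atom_weight_summable: "summable (atom_weight D \<tau> s)"
  by (rule summable_comparison_test[OF _ weight_summable]) (auto simp: atom_weight_nonneg atom_weight_le)

lemma atom_weight_suminf_nonneg: "0 \<le> (\<Sum>e. atom_weight D \<tau> s e)"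
  by (rule suminf_nonneg[OF atom_weight_summable atom_weight_nonneg])

lemma atom_weight_suminf_le: "(\<Sum>e. atom_weight D \<tau> s e) \<le> 1/2"
  using suminf_le[OF atom_weight_le atom_weight_summable weight_summable] weight_suminf by simp

lemma atom_weight_children:
  "atom_weight D \<tau> (s @ [False]) e + atom_weight D \<tau> (s @ [True]) e \<le> atom_weight D \<tau> s e"
proof -
  have "\<not> (prefix (s @ [False]) (\<tau> e) \<and> prefix (s @ [True]) (\<tau> e))"
    using prefix_same_cases[of "s @ [False]" "\<tau> e" "s @ [True]"] by auto
  moreover have "prefix (s @ [b]) (\<tau> e) \<Longrightarrow> prefix s (\<tau> e)" for b
    by (rule append_prefixD)
  ultimately show ?thesis
    using weight_pos[of e] by (auto simp: atom_weight_def)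
qed

lemma semimeasure_atomic_rho: "semimeasure (atomic_rho D \<tau>)"
  unfolding semimeasure_def
proof (intro conjI allI)
  fix s
  show "0 \<le> atomic_rho D \<tau> s" "atomic_rho D \<tau> s \<le> 1"
    using atom_weight_suminf_nonneg[of D \<tau> s] atom_weight_suminf_le[of D \<tau> s] by (auto simp: atomic_rho_def)
  let ?children = "\<lambda>e. atom_weight D \<tau> (s @ [False]) e + atom_weight D \<tau> (s @ [True]) e"
  have children_sum: "atomic_rho D \<tau> (s @ [False]) + atomic_rho D \<tau> (s @ [True]) = (\<Sum>e. ?children e)"
    by (simp add: atomic_rho_def suminf_add[OF atom_weight_summable atom_weight_summable])
  have "(\<Sum>e. ?children e) \<le> (\<Sum>e. atom_weight D \<tau> s e)"
    by (intro suminf_le atom_weight_children summable_add atom_weight_summable)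
  then show "atomic_rho D \<tau> (s @ [False]) + atomic_rho D \<tau> (s @ [True]) \<le> atomic_rho D \<tau> s"
    using children_sum atom_weight_suminf_le[of D \<tau> s] by (auto simp: atomic_rho_def)
qed (simp add: atomic_rho_def)

lemma atomic_rho_above_short_atoms:
  assumes short: "\<And>e. e < N \<Longrightarrow> length (\<tau> e) < length s" and "s \<noteq> []"
  shows "atomic_rho D \<tau> s \<le> (1/2) ^ N"
proof -
  have "atom_weight D \<tau> s e = 0" if "e < N" for e
    using short[OF that] prefix_length_le[of s "\<tau> e"] by (auto simp: atom_weight_def)
  then have "(\<Sum>e. atom_weight D \<tau> s e) = (\<Sum>i. atom_weight D \<tau> s (i + N))"
    using suminf_split_initial_segment[OF atom_weight_summable, of D \<tau> s N] by simp
  also have "\<dots> \<le> (\<Sum>i. (1/2) ^ N * weight i)"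
  proof (rule suminf_le)
    show "atom_weight D \<tau> s (i + N) \<le> (1/2) ^ N * weight i" for i
      using atom_weight_le[of D \<tau> s "i + N"] by (simp add: weight_def power_add mult_ac)
    show "summable (\<lambda>i. atom_weight D \<tau> s (i + N))"
      using atom_weight_summable by (rule summable_ignore_initial_segment)
    show "summable (\<lambda>i. (1/2::real) ^ N * weight i)"
      using weight_summable by (rule summable_mult)
  qed
  also have "\<dots> = (1/2) ^ N * (1/2)"
    using suminf_mult[OF weight_summable, of "(1/2) ^ N"] weight_suminf by simp
  finally show ?thesis
    using \<open>s \<noteq> []\<close> atom_weight_suminf_nonneg[of D \<tau> s] by (simp add: atomic_rho_def)
qed

lemma length_prefix_of [simp]: "length (prefix_of X n) = n"
  by (simp add: prefix_of_def)

lemma non_atomic_atomic_rho: "non_atomic (atomic_rho D \<tau>)"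
  unfolding non_atomic_def
proof
  fix X
  let ?f = "\<lambda>n. atomic_rho D \<tau> (prefix_of X n)"
  have nonneg: "0 \<le> ?f n" for n
    using semimeasure_atomic_rho[of D \<tau>] by (simp add: semimeasure_def)
  have bdd: "bdd_below (range ?f)" by (rule bdd_belowI[of _ 0]) (auto simp: nonneg)
  have le: "(INF n. ?f n) \<le> 0 + \<epsilon>" if "0 < \<epsilon>" for \<epsilon> :: real
  proof -
    obtain N where N: "(1/2::real) ^ N < \<epsilon>" using real_arch_pow_inv[OF \<open>0 < \<epsilon>\<close>, of "1/2"] by auto
    define n where "n = Suc (\<Sum>e<N. length (\<tau> e))"
    have "length (\<tau> e) < n" if "e < N" for e
      using member_le_sum[of e "{..<N}" "\<lambda>e. length (\<tau> e)"] that by (simp add: n_def)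
    then have "?f n \<le> (1/2) ^ N"
      by (intro atomic_rho_above_short_atoms) (auto simp: n_def simp flip: length_0_conv)
    moreover have "(INF n. ?f n) \<le> ?f n" by (rule cINF_lower[OF bdd]) simp
    ultimately show ?thesis using N by simp
  qed
  have "(INF n. ?f n) \<le> 0" by (rule field_le_epsilon) (rule le)
  moreover have "0 \<le> (INF n. ?f n)" by (rule cINF_greatest) (auto simp: nonneg)
  ultimately show "(INF n. ?f n) = 0" by simp
qed

lemma weight_le_atomic_rho: "e \<in> D \<Longrightarrow> weight e \<le> atomic_rho D \<tau> (\<tau> e)"
proof (cases "\<tau> e = []")
  case True
  have "(1/2::real) ^ (e + 2) \<le> 1" by (rule power_le_one) auto
  then show ?thesis using True by (simp add: atomic_rho_def weight_def)
next
  case False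
  assume "e \<in> D"
  then have "(\<Sum>e'\<in>{e}. atom_weight D \<tau> (\<tau> e) e') = weight e" by (simp add: atom_weight_def)
  moreover have "(\<Sum>e'\<in>{e}. atom_weight D \<tau> (\<tau> e) e') \<le> (\<Sum>e'. atom_weight D \<tau> (\<tau> e) e')"
    by (rule sum_le_suminf[OF atom_weight_summable]) (auto simp: atom_weight_nonneg)
  ultimately show ?thesis using False by (simp add: atomic_rho_def)
qed

definition atomic_rho_stage :: "(nat \<Rightarrow> nat set) \<Rightarrow> (nat \<Rightarrow> bool list) \<Rightarrow> bool list \<Rightarrow> nat \<Rightarrow> real" where
  "atomic_rho_stage D \<tau> s k = (if s = [] then 1 else \<Sum>e<k. atom_weight (D k) \<tau> s e)"

lemma atom_weight_mono: "D \<subseteq> D' \<Longrightarrow> atom_weight D \<tau> s e \<le> atom_weight D' \<tau> s e"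
  using weight_pos[of e] by (auto simp: atom_weight_def)

lemma atomic_rho_stage_mono:
  assumes "mono D"
  shows "atomic_rho_stage D \<tau> s k \<le> atomic_rho_stage D \<tau> s (Suc k)"
proof -
  have "(\<Sum>e<k. atom_weight (D k) \<tau> s e) \<le> (\<Sum>e<k. atom_weight (D (Suc k)) \<tau> s e)"
    using assms by (intro sum_mono atom_weight_mono) (simp add: mono_def)
  also have "\<dots> \<le> (\<Sum>e<Suc k. atom_weight (D (Suc k)) \<tau> s e)"
    by (simp add: atom_weight_nonneg)
  finally show ?thesis by (simp add: atomic_rho_stage_def)
qed

lemma atomic_rho_stage_LIMSEQ:
  assumes "mono D"
  shows "(\<lambda>k. atomic_rho_stage D \<tau> s k) \<longlonglongrightarrow> atomic_rho (\<Union>k. D k) \<tau> s"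
proof (cases "s = []")
  case True
  then show ?thesis by (simp add: atomic_rho_stage_def atomic_rho_def)
next
  case False
  let ?D = "\<Union>k. D k"
  show ?thesis
  proof (rule increasing_LIMSEQ)
    show "atomic_rho_stage D \<tau> s k \<le> atomic_rho_stage D \<tau> s (Suc k)" for k
      using assms by (rule atomic_rho_stage_mono)
    show "atomic_rho_stage D \<tau> s k \<le> atomic_rho ?D \<tau> s" for k
    proof -
      have "(\<Sum>e<k. atom_weight (D k) \<tau> s e) \<le> (\<Sum>e<k. atom_weight ?D \<tau> s e)"
        by (intro sum_mono atom_weight_mono) auto
      also have "\<dots> \<le> (\<Sum>e. atom_weight ?D \<tau> s e)"
        by (rule sum_le_suminf[OF atom_weight_summable]) (auto simp: atom_weight_nonneg)
      finally show ?thesis using False by (simp add: atomic_rho_stage_def atomic_rho_def)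
    qed
    fix \<epsilon> :: real assume "0 < \<epsilon>"
    have "(\<lambda>n. \<Sum>e<n. atom_weight ?D \<tau> s e) \<longlonglongrightarrow> (\<Sum>e. atom_weight ?D \<tau> s e)"
      by (rule summable_LIMSEQ[OF atom_weight_summable])
    then obtain N where "dist (\<Sum>e<N. atom_weight ?D \<tau> s e) (\<Sum>e. atom_weight ?D \<tau> s e) < \<epsilon>"
      using \<open>0 < \<epsilon>\<close> unfolding lim_sequentially by blast
    then have N: "(\<Sum>e. atom_weight ?D \<tau> s e) < (\<Sum>e<N. atom_weight ?D \<tau> s e) + \<epsilon>"
      by (simp add: dist_real_def)
    have "\<forall>e. \<exists>k. e \<in> ?D \<longrightarrow> e \<in> D k" by blast
    then obtain stage where stage: "\<And>e. e \<in> ?D \<Longrightarrow> e \<in> D (stage e)" by metis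
    define K where "K = N + (\<Sum>e<N. stage e)"
    have "atom_weight (D K) \<tau> s e = atom_weight ?D \<tau> s e" if "e < N" for e
    proof -
      have "stage e \<le> K" using member_le_sum[of e "{..<N}" stage] that by (simp add: K_def)
      then have "e \<in> ?D \<Longrightarrow> e \<in> D K" using stage monoD[OF assms] by blast
      then show ?thesis by (auto simp: atom_weight_def)
    qed
    then have "(\<Sum>e<N. atom_weight ?D \<tau> s e) = (\<Sum>e<N. atom_weight (D K) \<tau> s e)" by simp
    also have "\<dots> \<le> (\<Sum>e<K. atom_weight (D K) \<tau> s e)"
      by (rule sum_mono2) (auto simp: K_def atom_weight_nonneg)
    finally show "\<exists>k. atomic_rho ?D \<tau> s \<le> atomic_rho_stage D \<tau> s k + \<epsilon>"
      using N False by (intro exI[of _ K]) (simp add: atomic_rho_def atomic_rho_stage_def)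
  qed
qed

section \<open>The semi-measure\<close>

definition enumerated_by :: "nat \<Rightarrow> nat set" where
  "enumerated_by k = {e. \<exists>n<k. halting_witness e n}"

definition first_enumerated :: "nat \<Rightarrow> bool list" where
  "first_enumerated e = str_decode (psnd (LEAST n. halting_witness e n))"

definition rho :: "bool list \<Rightarrow> real" where
  "rho = atomic_rho (\<Union>k. enumerated_by k) first_enumerated"

lemma mono_enumerated_by: "mono enumerated_by"
  by (rule monoI) (auto simp: enumerated_by_def intro: less_le_trans)

text \<open>Numerator and denominator of the stage \<open>k\<close> approximation at the string with code \<open>x\<close>,
  over the common denominator \<open>2^(k+2)\<close>; code \<open>0\<close> is the empty string.\<close>

definition approx_num :: "nat \<Rightarrow> nat \<Rightarrow> nat" where
  "approx_num x k = (if x = 0 then 1 else \<Sum>e<k. (if (\<exists>n<k. halting_witness e n)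
      \<and> code_prefix x (psnd (bleast (halting_witness e) k)) then 2 ^ (k - e) else 0))"

definition approx_den :: "nat \<Rightarrow> nat \<Rightarrow> nat" where
  "approx_den x k = (if x = 0 then 0 else 2 ^ (k + 2) - 1)"

lemma computable1_approx_num: "computable1 (\<lambda>p. approx_num (pfst p) (psnd p))"
  unfolding approx_num_def
  by (intro computable1_ifI decidable_eqI computable1_sumI decidable_conjI decidable_bexI
      decidable_halting_witnessI decidable_code_prefixI computable1_psndI computable1_bleastI
      computable1_pow2I computable1_subI computable1_addI computable1_pfstI computable1_constI computable1_idI)

lemma computable1_approx_den: "computable1 (\<lambda>p. approx_den (pfst p) (psnd p))"
  unfolding approx_den_def
  by (intro computable1_ifI decidable_eqI computable1_pow2I computable1_subI computable1_addI
      computable1_pfstI computable1_psndI computable1_constI computable1_idI)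

lemma str_code_eq_0_iff: "str_code s = 0 \<longleftrightarrow> s = []"
  by (cases s) auto

lemma weight_eq_fraction: "e \<le> k \<Longrightarrow> (2::real) ^ (k - e) / 2 ^ (k + 2) = weight e"
proof -
  assume "e \<le> k"
  then have "(2::real) ^ k = 2 ^ (k - e) * 2 ^ e" by (simp add: power_add[symmetric])
  then show ?thesis by (simp add: weight_def power_add field_simps power_one_over)
qed

lemma atomic_rho_stage_fraction:
  "atomic_rho_stage enumerated_by first_enumerated s k
     = (real (approx_num (str_code s) k) - real 0) / (real (approx_den (str_code s) k) + 1)"
proof (cases "s = []")
  case True then show ?thesis by (simp add: atomic_rho_stage_def approx_num_def approx_den_def)
next
  case False
  then have nz: "str_code s \<noteq> 0" by (simp add: str_code_eq_0_iff)
  have den: "real (approx_den (str_code s) k) + 1 = 2 ^ (k + 2)"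
    using nz by (simp add: approx_den_def of_nat_diff)
  have summand: "atom_weight (enumerated_by k) first_enumerated s e
      = real (if (\<exists>n<k. halting_witness e n) \<and> code_prefix (str_code s) (psnd (bleast (halting_witness e) k))
              then 2 ^ (k - e) else 0) / 2 ^ (k + 2)"
    if "e < k" for e
  proof (cases "\<exists>n<k. halting_witness e n")
    case True
    then have "code_prefix (str_code s) (psnd (bleast (halting_witness e) k)) \<longleftrightarrow> prefix s (first_enumerated e)"
      using code_prefix_iff[of s "first_enumerated e"] by (simp add: bleast_eq first_enumerated_def)
    then show ?thesis
      using True \<open>e < k\<close> weight_eq_fraction[of e k] by (simp add: atom_weight_def enumerated_by_def)
  qed (auto simp: atom_weight_def enumerated_by_def)
  have "atomic_rho_stage enumerated_by first_enumerated s k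
      = (\<Sum>e<k. real (if (\<exists>n<k. halting_witness e n) \<and> code_prefix (str_code s) (psnd (bleast (halting_witness e) k))
              then 2 ^ (k - e) else 0) / 2 ^ (k + 2))"
    using False summand by (simp add: atomic_rho_stage_def)
  also have "\<dots> = real (approx_num (str_code s) k) / 2 ^ (k + 2)"
    using nz by (simp add: approx_num_def sum_divide_distrib[symmetric])
  finally show ?thesis using den by simp
qed

lemma left_ce_rho: "left_ce rho"
proof -
  obtain ra where ra: "\<forall>x y. eval ra [x, y] (approx_num x y)"
    using recf_of_computable1_pair[OF computable1_approx_num] by blast
  obtain rc where rc: "\<forall>x y. eval rc [x, y] (approx_den x y)"
    using recf_of_computable1_pair[OF computable1_approx_den] by blast
  let ?q = "atomic_rho_stage enumerated_by first_enumerated"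
  have "\<forall>\<sigma> s. \<exists>a b c. eval ra [str_code \<sigma>, s] a \<and> eval Zero [str_code \<sigma>, s] b \<and>
      eval rc [str_code \<sigma>, s] c \<and> ?q \<sigma> s = (real a - real b) / (real c + 1)"
    using ra rc atomic_rho_stage_fraction by (blast intro: eval_zero)
  moreover have "\<forall>\<sigma> s. ?q \<sigma> s \<le> ?q \<sigma> (Suc s)"
    using atomic_rho_stage_mono[OF mono_enumerated_by] by blast
  moreover have "\<forall>\<sigma>. ?q \<sigma> \<longlonglongrightarrow> rho \<sigma>"
    using atomic_rho_stage_LIMSEQ[OF mono_enumerated_by] by (simp add: rho_def)
  ultimately show ?thesis unfolding left_ce_def by blast
qed

section \<open>Randomness\<close>

lemma rho_set_ge_member: "\<tau> \<in> E \<Longrightarrow> ennreal (\<rho> \<tau>) \<le> rho_set \<rho> E"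
proof -
  assume "\<tau> \<in> E"
  then have "infsum (\<lambda>\<sigma>. ennreal (\<rho> \<sigma>)) {\<tau>} \<le> infsum (\<lambda>\<sigma>. ennreal (\<rho> \<sigma>)) E"
    by (intro infsum_mono_neutral) (auto intro: nonneg_summable_on_complete)
  then show ?thesis by (simp add: rho_set_def)
qed

text \<open>Program \<open>e\<close> is diagonalised at test level \<open>e + 3\<close>, where the admissible weight
  \<open>2^-(e+3)\<close> is below the weight of its atom.\<close>

lemma test_level_empty:
  assumes U: "\<And>i \<sigma>. \<sigma> \<in> U i \<longleftrightarrow> (\<exists>v. eval r [i, str_code \<sigma>] v)"
    and small: "rho_set rho (U (recf_code r + 3)) \<le> ennreal ((1/2) ^ (recf_code r + 3))"
  shows "U (recf_code r + 3) = {}"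
proof (rule ccontr)
  let ?e = "recf_code r"
  assume "U (?e + 3) \<noteq> {}"
  then obtain \<sigma> where "\<sigma> \<in> U (?e + 3)" by blast
  then obtain L where "halting_witness ?e (pair L (str_code \<sigma>))"
    using U halting_witness_iff_eval by blast
  then have "\<exists>n. halting_witness ?e n" by blast
  then have "halting_witness ?e (LEAST n. halting_witness ?e n)" by (rule LeastI_ex)
  then have enum: "?e \<in> (\<Union>k. enumerated_by k)" and "first_enumerated ?e \<in> U (?e + 3)"
    using halting_witness_eval U by (auto simp: enumerated_by_def first_enumerated_def)
  then have "ennreal (rho (first_enumerated ?e)) \<le> ennreal ((1/2) ^ (?e + 3))"
    using rho_set_ge_member small order.trans by blast
  then have "rho (first_enumerated ?e) \<le> (1/2) ^ (?e + 3)"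
    by (simp add: ennreal_le_iff)
  moreover have "weight ?e \<le> rho (first_enumerated ?e)"
    unfolding rho_def using enum by (rule weight_le_atomic_rho)
  moreover have "(1/2::real) ^ (?e + 3) < (1/2) ^ (?e + 2)"
    by (rule power_strict_decreasing) auto
  ultimately show False by (simp add: weight_def)
qed

lemma MLR_rho: "X \<in> MLR rho"
  unfolding MLR_def
proof (intro CollectI allI impI)
  fix U assume test: "unif_ce U \<and> (\<forall>i. rho_set rho (U i) \<le> ennreal ((1/2) ^ i))"
  then obtain r where "\<And>i \<sigma>. \<sigma> \<in> U i \<longleftrightarrow> (\<exists>v. eval r [i, str_code \<sigma>] v)"
    unfolding unif_ce_def by blast
  then have "U (recf_code r + 3) = {}"
    using test by (intro test_level_empty) auto
  then show "X \<notin> (\<Inter>i. cyl (U i))"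
    by (auto simp: cyl_def)
qed

theorem theorem5p6:
  shows "\<exists>\<rho>. semimeasure \<rho> \<and> left_ce \<rho> \<and> non_atomic \<rho> \<and> (\<forall>X. X \<in> MLR \<rho>)"
  using semimeasure_atomic_rho non_atomic_atomic_rho left_ce_rho MLR_rho unfolding rho_def by blast

end
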